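(* Let $G$ be a simple graph of order $n$ and let $m\ge 1$. Let $M$ be a maximum matching of $G$, $\alpha'(G)=|M|$, and let $l=n-2\alpha'(G)$ be the number of vertices of $G$ not covered by $M$. Then $s(G\circ \overline{K_m})=\alpha'(G)+l$. In particular, if $G$ has a perfect matching, then $s(G\circ\overline{K_m})=n/2$.
   Context: A matching in a graph is a set of edges no two of which share a vertex; it is maximal if it is not properly contained in another matching, and maximum if it has the largest possible size. $\alpha'(G)$ is the size of a maximum matching of $G$. The saturation number $s(G)$ is the minimum cardinality of a maximal matching of $G$. $\overline{K_m}$ is the edgeless graph on $m$ vertices. The corona $G_1\circ G_2$ of graphs $G_1$ and $G_2$ is obtained by taking one copy of $G_1$ and $|V(G_1)|$ disjoint copies of $G_2$, and joining the $i$-th vertex of $G_1$ by an edge to every vertex of the $i$-th copy of $G_2$. *)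

theory Defs
  imports Complex_Main
begin

definition simple_graph :: "'a set \<Rightarrow> 'a set set \<Rightarrow> bool" where
  "simple_graph V E \<longleftrightarrow> finite V \<and>
     (\<forall>e\<in>E. \<exists>u v. u \<noteq> v \<and> u \<in> V \<and> v \<in> V \<and> e = {u, v})"

definition matching :: "'a set set \<Rightarrow> 'a set set \<Rightarrow> bool" where
  "matching E M \<longleftrightarrow> M \<subseteq> E \<and> (\<forall>e1\<in>M. \<forall>e2\<in>M. e1 \<noteq> e2 \<longrightarrow> e1 \<inter> e2 = {})"

definition maximal_matching :: "'a set set \<Rightarrow> 'a set set \<Rightarrow> bool" where
  "maximal_matching E M \<longleftrightarrow> matching E M \<and> (\<forall>M'. matching E M' \<longrightarrow> M \<subseteq> M' \<longrightarrow> M' = M)"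

definition maximum_matching :: "'a set set \<Rightarrow> 'a set set \<Rightarrow> bool" where
  "maximum_matching E M \<longleftrightarrow> matching E M \<and> (\<forall>M'. matching E M' \<longrightarrow> card M' \<le> card M)"

definition perfect_matching :: "'a set \<Rightarrow> 'a set set \<Rightarrow> 'a set set \<Rightarrow> bool" where
  "perfect_matching V E M \<longleftrightarrow> matching E M \<and> \<Union>M = V"

definition matching_number :: "'a set set \<Rightarrow> nat" where
  "matching_number E = Max (card ` {M. matching E M})"

definition saturation_number :: "'a set set \<Rightarrow> nat" where
  "saturation_number E = Min (card ` {M. maximal_matching E M})"

text \<open>Corona G1 o G2: vertices Inl v (v in V1) and Inr (v, w) (the copy of w in
  the copy of G2 attached to v).\<close>
definition corona_verts :: "'a set \<Rightarrow> 'b set \<Rightarrow> ('a + 'a \<times> 'b) set" where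
  "corona_verts V1 V2 = Inl ` V1 \<union> {Inr (v, w) | v w. v \<in> V1 \<and> w \<in> V2}"

definition corona_edges ::
  "'a set \<Rightarrow> 'a set set \<Rightarrow> 'b set \<Rightarrow> 'b set set \<Rightarrow> ('a + 'a \<times> 'b) set set" where
  "corona_edges V1 E1 V2 E2 =
     (\<lambda>e. Inl ` e) ` E1
   \<union> {(\<lambda>w. Inr (v, w)) ` e | v e. v \<in> V1 \<and> e \<in> E2}
   \<union> {{Inl v, Inr (v, w)} | v w. v \<in> V1 \<and> w \<in> V2}"

definition empty_verts :: "nat \<Rightarrow> nat set" where
  "empty_verts m = {..<m}"

definition empty_edges :: "nat \<Rightarrow> nat set set" where
  "empty_edges m = {}"

end

theory Submission
  imports Defs
begin

(* A maximal matching N of the corona must cover every base vertex Inl v, for otherwise a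
   pendant edge {Inl v, Inr (v, w)} could be added. Only the edges of N copied from G cover two
   base vertices, and they form a matching of G; hence card V \<le> card N + \<alpha>'(G).
   Conversely, a maximum matching of G together with one pendant edge at each of the
   card V - 2 \<alpha>'(G) vertices it misses is maximal, since every corona edge has a base vertex. *)

lemma simple_graph_edge:
  assumes "simple_graph V E" "e \<in> E"
  shows "card e = 2" "e \<subseteq> V"
  using assms unfolding simple_graph_def by fastforce+

lemma simple_graph_finite_edges:
  assumes "simple_graph V E"
  shows "finite E"
proof (rule finite_subset)
  show "E \<subseteq> Pow V" using simple_graph_edge(2)[OF assms] by blast
  show "finite (Pow V)" using assms by (simp add: simple_graph_def)
qed

lemma matching_disjoint:
  "matching E M \<Longrightarrow> e1 \<in> M \<Longrightarrow> e2 \<in> M \<Longrightarrow> e1 \<noteq> e2 \<Longrightarrow> e1 \<inter> e2 = {}"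
  unfolding matching_def by blast

lemma matching_subset: "matching E M \<Longrightarrow> M \<subseteq> E"
  unfolding matching_def by blast

lemma finite_matchings: "finite E \<Longrightarrow> finite {M. matching E M}"
  by (rule finite_subset[of _ "Pow E"]) (auto simp: matching_def)

lemma card_Union_matching:
  assumes "simple_graph V E" "matching E M"
  shows "card (\<Union>M) = 2 * card M"
proof -
  have "M \<subseteq> E" using assms(2) by (rule matching_subset)
  have "card (\<Union>M) = sum card M"
  proof (rule card_Union_disjoint)
    show "pairwise disjnt M" using matching_disjoint[OF assms(2)] by (auto simp: pairwise_def disjnt_def)
    show "finite A" if "A \<in> M" for A
      using simple_graph_edge(1)[OF assms(1)] \<open>M \<subseteq> E\<close> that card.infinite by fastforce
  qed
  also have "\<dots> = (\<Sum>e\<in>M. 2)"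
    using simple_graph_edge(1)[OF assms(1)] \<open>M \<subseteq> E\<close> by (intro sum.cong) auto
  also have "\<dots> = 2 * card M" by simp
  finally show ?thesis .
qed

lemma Union_matching_subset: "simple_graph V E \<Longrightarrow> matching E M \<Longrightarrow> \<Union>M \<subseteq> V"
  using simple_graph_edge(2) matching_subset by blast

lemma card_matching_le:
  assumes "simple_graph V E" "matching E M"
  shows "2 * card M \<le> card V"
  using card_mono[OF _ Union_matching_subset[OF assms]] card_Union_matching[OF assms] assms(1)
  by (simp add: simple_graph_def)

lemma maximal_matching_meets_edge:
  assumes max: "maximal_matching E N" and "e \<in> E" "e \<noteq> {}"
  shows "e \<inter> \<Union>N \<noteq> {}"
proof
  assume free: "e \<inter> \<Union>N = {}"
  have "matching E (insert e N)"
    using max free \<open>e \<in> E\<close> unfolding maximal_matching_def matching_def by blast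
  then have "e \<in> N" using max unfolding maximal_matching_def by blast
  then show False using free \<open>e \<noteq> {}\<close> by blast
qed

lemma maximal_matchingI:
  assumes "matching E N" and meets: "\<And>e. e \<in> E \<Longrightarrow> e \<inter> \<Union>N \<noteq> {}"
  shows "maximal_matching E N"
  unfolding maximal_matching_def
proof (intro conjI allI impI assms(1))
  fix N' assume N': "matching E N'" "N \<subseteq> N'"
  show "N' = N"
  proof
    show "N' \<subseteq> N"
    proof
      fix e assume "e \<in> N'"
      then obtain f where "f \<in> N" "e \<inter> f \<noteq> {}"
        using meets matching_subset[OF N'(1)] by blast
      then show "e \<in> N" using matching_disjoint[OF N'(1) \<open>e \<in> N'\<close>] N'(2) by blast
    qed
  qed (rule N'(2))
qed

lemma matching_vimage:
  assumes "matching F N" "inj f"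
  shows "matching E {a \<in> E. f ` a \<in> N}"
  unfolding matching_def
proof (intro conjI ballI impI)
  fix a1 a2 assume a: "a1 \<in> {a \<in> E. f ` a \<in> N}" "a2 \<in> {a \<in> E. f ` a \<in> N}" "a1 \<noteq> a2"
  then have "f ` a1 \<noteq> f ` a2" by (simp add: inj_image_eq_iff[OF assms(2)])
  then have "f ` (a1 \<inter> a2) = {}"
    using matching_disjoint[OF assms(1)] a by (simp add: image_Int[OF assms(2)])
  then show "a1 \<inter> a2 = {}" by simp
qed simp

lemma matching_image:
  assumes "matching E M" "inj f" "(`) f ` E \<subseteq> F"
  shows "matching F ((`) f ` M)"
  using assms unfolding matching_def by (auto simp: inj_image_eq_iff image_Int[symmetric])

lemma matching_Un:
  assumes A: "matching E A" and B: "matching E B" and "\<Union>A \<inter> \<Union>B = {}"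
  shows "matching E (A \<union> B)"
proof -
  have "e1 \<inter> e2 = {}" if "e1 \<in> A \<union> B" "e2 \<in> A \<union> B" "e1 \<noteq> e2" for e1 e2
  proof (cases "e1 \<in> A \<longleftrightarrow> e2 \<in> A")
    case True
    then show ?thesis using that matching_disjoint[OF A] matching_disjoint[OF B] by blast
  next
    case False
    then show ?thesis using that assms(3) by blast
  qed
  then show ?thesis
    unfolding matching_def using matching_subset[OF A] matching_subset[OF B] by blast
qed

lemma saturation_number_eqI:
  assumes "finite E" "maximal_matching E N"
    and "\<And>N'. maximal_matching E N' \<Longrightarrow> card N \<le> card N'"
  shows "saturation_number E = card N"
  unfolding saturation_number_def
proof (rule Min_eqI)
  have "{N. maximal_matching E N} \<subseteq> {M. matching E M}"
    by (auto simp: maximal_matching_def)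
  then show "finite (card ` {N. maximal_matching E N})"
    using finite_matchings[OF assms(1)] finite_subset by blast
qed (use assms in auto)

lemma matching_number_eqI:
  assumes "finite E" "maximum_matching E M"
  shows "matching_number E = card M"
  unfolding matching_number_def
  by (rule Max_eqI) (use assms finite_matchings in \<open>auto simp: maximum_matching_def\<close>)

lemma corona_edgeless_edges:
  "corona_edges V E (empty_verts m) (empty_edges m) =
     (`) Inl ` E \<union> {{Inl v, Inr (v, w)} | v w. v \<in> V \<and> w < m}"
  unfolding corona_edges_def empty_verts_def empty_edges_def by auto

lemma finite_corona_edgeless_edges:
  assumes "simple_graph V E"
  shows "finite (corona_edges V E (empty_verts m) (empty_edges m))"
proof -
  have "{{Inl v, Inr (v, w)} | v w. v \<in> V \<and> w < m} = (\<lambda>(v, w). {Inl v, Inr (v, w)}) ` (V \<times> {..<m})"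
    by auto
  then show ?thesis
    using assms simple_graph_finite_edges[OF assms]
    by (simp add: corona_edgeless_edges simple_graph_def)
qed

lemma corona_edgeless_edgeE:
  assumes "e \<in> corona_edges V E (empty_verts m) (empty_edges m)"
  obtains (base) a where "a \<in> E" "e = Inl ` a"
    | (pendant) v w where "v \<in> V" "w < m" "e = {Inl v, Inr (v, w)}"
  using assms unfolding corona_edgeless_edges by blast

lemma corona_pendant_edge:
  assumes "v \<in> V" "w < m"
  shows "{Inl v, Inr (v, w)} \<in> corona_edges V E (empty_verts m) (empty_edges m)"
proof -
  have "{Inl v, Inr (v, w)} \<in> {{Inl v, Inr (v, w)} | v w. v \<in> V \<and> w < m}"
    using assms by (intro CollectI exI[of _ v] exI[of _ w]) simp
  then show ?thesis unfolding corona_edgeless_edges by (rule UnI2)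
qed

lemma corona_edge_Inr:
  assumes "e \<in> corona_edges V E (empty_verts m) (empty_edges m)" "Inr (v, w) \<in> e"
  shows "e = {Inl v, Inr (v, w)}"
  using assms by (auto simp: corona_edgeless_edges)

lemma corona_edge_meets_base:
  assumes G: "simple_graph V E" and "e \<in> corona_edges V E (empty_verts m) (empty_edges m)"
  obtains v where "v \<in> V" "Inl v \<in> e"
  using assms(2)
proof (cases rule: corona_edgeless_edgeE)
  case (base a)
  then obtain u w where "u \<in> V" "a = {u, w}" using G unfolding simple_graph_def by blast
  then show ?thesis using that base(2) by blast
next
  case (pendant v w)
  then show ?thesis using that by blast
qed

lemma corona_maximal_matching_covers_base:
  assumes "m \<ge> 1" "v \<in> V"
    and max: "maximal_matching (corona_edges V E (empty_verts m) (empty_edges m)) N"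
  shows "Inl v \<in> \<Union>N"
proof -
  have "{Inl v, Inr (v, 0)} \<in> corona_edges V E (empty_verts m) (empty_edges m)"
    using assms(1,2) by (intro corona_pendant_edge) simp_all
  then have "{Inl v, Inr (v, 0)} \<inter> \<Union>N \<noteq> {}"
    by (rule maximal_matching_meets_edge[OF max]) simp
  then obtain e where e: "e \<in> N" "Inl v \<in> e \<or> Inr (v, 0) \<in> e" by blast
  have H: "e \<in> corona_edges V E (empty_verts m) (empty_edges m)"
    using max e(1) matching_subset by (auto simp: maximal_matching_def)
  have "Inl v \<in> e"
  proof (rule ccontr)
    assume "Inl v \<notin> e"
    then have "e = {Inl v, Inr (v, 0)}" using e(2) corona_edge_Inr[OF H] by simp
    with \<open>Inl v \<notin> e\<close> show False by simp
  qed
  then show ?thesis using e(1) by blast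
qed

lemma sum_if_subset_two_one:
  assumes "finite N" "X \<subseteq> N"
  shows "(\<Sum>e\<in>N. if e \<in> X then 2 else 1) = card N + (card X :: nat)"
proof -
  have "finite X" using assms by (rule finite_subset[rotated])
  have "(\<Sum>e\<in>N. if e \<in> X then 2 else 1)
      = (\<Sum>e\<in>N - X. if e \<in> X then 2 else 1) + (\<Sum>e\<in>X. if e \<in> X then 2 else (1 :: nat))"
    by (rule sum.subset_diff[OF assms(2,1)])
  also have "\<dots> = card (N - X) + 2 * card X" by simp
  also have "\<dots> = card N + card X"
    using card_Diff_subset[OF \<open>finite X\<close> assms(2)] card_mono[OF assms] by simp
  finally show ?thesis .
qed

lemma corona_maximal_matching_card_ge:
  assumes G: "simple_graph V E" and "m \<ge> 1"
    and max: "maximal_matching (corona_edges V E (empty_verts m) (empty_edges m)) N"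
    and mm: "maximum_matching E M"
  shows "card V \<le> card N + card M"
proof -
  let ?H = "corona_edges V E (empty_verts m) (empty_edges m)"
  have N: "matching ?H N" using max by (simp add: maximal_matching_def)
  have "finite N" by (rule finite_subset[OF matching_subset[OF N] finite_corona_edgeless_edges[OF G]])
  define MG where "MG = {a \<in> E. Inl ` a \<in> N}"
  define NG :: "('a + 'a \<times> nat) set set" where "NG = (`) Inl ` MG"
  have "NG \<subseteq> N" unfolding NG_def MG_def by blast
  have "matching E MG" unfolding MG_def by (rule matching_vimage[OF N]) simp
  then have "card MG \<le> card M" using mm by (simp add: maximum_matching_def)
  moreover have "card NG = card MG"
    unfolding NG_def by (rule card_image, rule inj_onI) (simp add: inj_image_eq_iff)
  ultimately have "card NG \<le> card M" by simp
  have base_count: "card (e \<inter> Inl ` V) \<le> (if e \<in> NG then 2 else 1)" if "e \<in> N" for e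
  proof -
    have "e \<in> ?H" using that matching_subset[OF N] by blast
    then show ?thesis
    proof (cases rule: corona_edgeless_edgeE)
      case (base a)
      have "card a = 2" using simple_graph_edge(1)[OF G base(1)] .
      then have "finite e" "card e = 2"
        using base(2) card_ge_0_finite[of a] by (simp_all add: card_image)
      then have "card (e \<inter> Inl ` V) \<le> 2" using card_mono[OF \<open>finite e\<close>, of "e \<inter> Inl ` V"] by simp
      moreover have "e \<in> NG" using base that unfolding NG_def MG_def by blast
      ultimately show ?thesis by simp
    next
      case (pendant v w)
      then have sub: "e \<inter> Inl ` V \<subseteq> {Inl v}" by auto
      have "card (e \<inter> Inl ` V) \<le> card {Inl v}" using card_mono[OF _ sub] by simp
      then show ?thesis by simp
    qed
  qed
  have "Inl ` V \<subseteq> \<Union>N"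
    using corona_maximal_matching_covers_base[OF assms(2) _ max] by blast
  then have "Inl ` V = (\<Union>e\<in>N. e \<inter> Inl ` V)" by blast
  then have "card V = card (\<Union>e\<in>N. e \<inter> Inl ` V)" by (simp add: card_image)
  also have "\<dots> \<le> (\<Sum>e\<in>N. card (e \<inter> Inl ` V))" by (rule card_UN_le[OF \<open>finite N\<close>])
  also have "\<dots> \<le> (\<Sum>e\<in>N. if e \<in> NG then 2 else 1)" by (rule sum_mono) (rule base_count)
  also have "\<dots> = card N + card NG" by (rule sum_if_subset_two_one[OF \<open>finite N\<close> \<open>NG \<subseteq> N\<close>])
  also have "\<dots> \<le> card N + card M" using \<open>card NG \<le> card M\<close> by simp
  finally show ?thesis .
qed

lemma corona_maximal_matching_exists:
  assumes G: "simple_graph V E" and "m \<ge> 1" and M: "matching E M"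
  shows "\<exists>N. maximal_matching (corona_edges V E (empty_verts m) (empty_edges m)) N
             \<and> card N = card M + (card V - 2 * card M)"
proof -
  let ?H = "corona_edges V E (empty_verts m) (empty_edges m)"
  define U where "U = V - \<Union>M"
  define A :: "('a + 'a \<times> nat) set set" where "A = (`) Inl ` M"
  define P :: "('a + 'a \<times> nat) set set" where "P = (\<lambda>v. {Inl v, Inr (v, 0)}) ` U"
  have "finite V" using G by (simp add: simple_graph_def)
  have "matching ?H A"
    unfolding A_def corona_edgeless_edges by (rule matching_image[OF M inj_Inl Un_upper1])
  moreover have "matching ?H P"
    unfolding matching_def
  proof (intro conjI ballI impI)
    show "P \<subseteq> ?H"
    proof
      fix e assume "e \<in> P"
      then obtain v where "v \<in> V" "e = {Inl v, Inr (v, 0)}" unfolding P_def U_def by blast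
      then show "e \<in> ?H" using \<open>m \<ge> 1\<close> by (simp add: corona_pendant_edge)
    qed
    fix e1 e2 assume "e1 \<in> P" "e2 \<in> P" "e1 \<noteq> e2"
    then show "e1 \<inter> e2 = {}" unfolding P_def by auto
  qed
  moreover have "\<Union>A \<inter> \<Union>P = {}" unfolding A_def P_def U_def by auto
  ultimately have N: "matching ?H (A \<union> P)" by (rule matching_Un)
  have cover: "Inl ` V \<subseteq> \<Union>(A \<union> P)" unfolding A_def P_def U_def by auto
  have "maximal_matching ?H (A \<union> P)"
  proof (rule maximal_matchingI[OF N])
    fix e assume "e \<in> ?H"
    then obtain v where "v \<in> V" "Inl v \<in> e" by (rule corona_edge_meets_base[OF G])
    then show "e \<inter> \<Union>(A \<union> P) \<noteq> {}" using cover by blast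
  qed
  moreover have "card (A \<union> P) = card M + (card V - 2 * card M)"
  proof -
    have "finite M" by (rule finite_subset[OF matching_subset[OF M] simple_graph_finite_edges[OF G]])
    have "card A = card M"
      unfolding A_def by (rule card_image, rule inj_onI) (simp add: inj_image_eq_iff)
    moreover have "card P = card U"
      unfolding P_def by (rule card_image, rule inj_onI) (simp add: doubleton_eq_iff)
    moreover have "card U = card V - 2 * card M"
      using card_Diff_subset[OF finite_subset[OF _ \<open>finite V\<close>]] Union_matching_subset[OF G M]
        card_Union_matching[OF G M]
      unfolding U_def by simp
    moreover have "card (A \<union> P) = card A + card P"
      by (rule card_Un_disjoint) (auto simp: A_def P_def U_def \<open>finite M\<close> \<open>finite V\<close>)
    ultimately show ?thesis by simp
  qed
  ultimately show ?thesis by blast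
qed

theorem theorem2p2:
  fixes V :: "'a set" and E :: "'a set set" and m :: nat and M :: "'a set set"
  assumes "simple_graph V E"
    and "m \<ge> 1"
    and "maximum_matching E M"
  shows "saturation_number (corona_edges V E (empty_verts m) (empty_edges m))
           = card M + (card V - 2 * card M)
       \<and> matching_number E = card M
       \<and> ((\<exists>P. perfect_matching V E P) \<longrightarrow>
            real (saturation_number (corona_edges V E (empty_verts m) (empty_edges m)))
              = real (card V) / 2)"
proof -
  let ?H = "corona_edges V E (empty_verts m) (empty_edges m)"
  have M: "matching E M" using assms(3) by (simp add: maximum_matching_def)
  obtain N where N: "maximal_matching ?H N" "card N = card M + (card V - 2 * card M)"
    using corona_maximal_matching_exists[OF assms(1,2) M] by blast
  have "card N \<le> card N'" if "maximal_matching ?H N'" for N'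
    using corona_maximal_matching_card_ge[OF assms(1,2) that assms(3)] N(2)
      card_matching_le[OF assms(1) M] by linarith
  then have "saturation_number ?H = card M + (card V - 2 * card M)"
    using saturation_number_eqI[OF finite_corona_edgeless_edges[OF assms(1)] N(1)] N(2) by simp
  moreover have "matching_number E = card M"
    by (rule matching_number_eqI[OF simple_graph_finite_edges[OF assms(1)] assms(3)])
  moreover have "card V = 2 * card M" if "perfect_matching V E P" for P
  proof -
    have "card V = 2 * card P"
      using that card_Union_matching[OF assms(1)] by (auto simp: perfect_matching_def)
    moreover have "card P \<le> card M"
      using that assms(3) by (simp add: perfect_matching_def maximum_matching_def)
    ultimately show ?thesis using card_matching_le[OF assms(1) M] by linarith
  qed
  ultimately show ?thesis by auto
qed

end
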